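(* With the notation below, the map $$\mathcal N^r_{x_0}\longrightarrow N_0\times N_2\times\cdots\times N_r,\qquad j^r_{x_0}g\longmapsto (g_{x_0},g^2_{x_0},\dots,g^r_{x_0})$$ is a diffeomorphism (for $r\le 1$ the target is just $N_0$).
   Context: $X$ is a smooth $n$-manifold, $x_0\in X$, $p+q=n$, $(z_1,\dots,z_n)$ a fixed coordinate system centred at $x_0$, $r\ge0$. $\mathcal N^r_{x_0}$ is the submanifold of the manifold $J^r_{x_0}M$ of $r$-jets at $x_0$ of semi-Riemannian metrics of signature $(p,q)$ consisting of those jets whose coefficients $g_{ij}$ in the coordinates $z$ satisfy the Gauss-lemma equations $\sum_j g_{ij}z_j=\sum_j g_{ij}(x_0)z_j$ up to order $r$. For $k\ge1$, $N_k$ is the vector space of $(k+2)$-covariant tensors $T$ on $T_{x_0}X$ that are symmetric in the first two indices and in the last $k$ indices, and whose cyclic sum over the last $k+1$ indices vanishes: $T_{ijk_1\dots k_k}+T_{ik_kjk_1\dots k_{k-1}}+\cdots+T_{ik_1\dots k_kj}=0$; $N_0$ is the open set of symmetric bilinear forms of signature $(p,q)$ on $T_{x_0}X$. For $j^r_{x_0}g\in\mathcal N^r_{x_0}$ and $2\le s\le r$, $g^s_{x_0}$ is the tensor $\sum \frac{\partial^s g_{ij}}{\partial z_{k_1}\cdots\partial z_{k_s}}(x_0)\,dz_i\otimes dz_j\otimes dz_{k_1}\otimes\cdots\otimes dz_{k_s}$ (the $s$-th normal tensor of $g$ at $x_0$), and $g_{x_0}$ is the value of the metric at $x_0$. *)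

theory Defs
  imports "HOL-Analysis.Analysis" "HOL-Library.Multiset"
begin

text \<open>For a finite index set I, the coordinate space R^I is realised as the
functions that vanish outside I, with the (product = Euclidean) topology.\<close>

definition coord_space :: "'a set \<Rightarrow> ('a \<Rightarrow> real) set" where
  "coord_space I = {x. \<forall>a. a \<notin> I \<longrightarrow> x a = 0}"

definition pd :: "'a \<Rightarrow> (('a \<Rightarrow> real) \<Rightarrow> real) \<Rightarrow> ('a \<Rightarrow> real) \<Rightarrow> real" where
  "pd a F x = deriv (\<lambda>t. F (x(a := x a + t))) 0"

fun ipd :: "'a list \<Rightarrow> (('a \<Rightarrow> real) \<Rightarrow> real) \<Rightarrow> ('a \<Rightarrow> real) \<Rightarrow> real" where
  "ipd [] F = F"
| "ipd (a # as) F = pd a (ipd as F)"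

definition smooth_fun :: "'a set \<Rightarrow> ('a \<Rightarrow> real) set \<Rightarrow> (('a \<Rightarrow> real) \<Rightarrow> real) \<Rightarrow> bool" where
  "smooth_fun I U F \<longleftrightarrow>
     (\<forall>as\<in>lists I. continuous_on U (ipd as F) \<and>
        (\<forall>x\<in>U. \<forall>a\<in>I. (\<lambda>t. ipd as F (x(a := x a + t))) differentiable (at 0)))"

definition smooth_map :: "'a set \<Rightarrow> ('a \<Rightarrow> real) set \<Rightarrow> (('a \<Rightarrow> real) \<Rightarrow> ('b \<Rightarrow> real)) \<Rightarrow> bool" where
  "smooth_map I U F \<longleftrightarrow> (\<forall>b. smooth_fun I U (\<lambda>x. F x b))"

text \<open>Diffeomorphism between arbitrary subsets S of R^I and T of R^J (Milnor):
a bijection which, as well as its inverse, extends locally (here: to an open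
neighbourhood) to a smooth map.\<close>

definition diffeo :: "'a set \<Rightarrow> 'b set \<Rightarrow> (('a \<Rightarrow> real) \<Rightarrow> ('b \<Rightarrow> real))
                      \<Rightarrow> ('a \<Rightarrow> real) set \<Rightarrow> ('b \<Rightarrow> real) set \<Rightarrow> bool" where
  "diffeo I J f S T \<longleftrightarrow>
     finite I \<and> finite J \<and> S \<subseteq> coord_space I \<and> T \<subseteq> coord_space J \<and>
     bij_betw f S T \<and>
     (\<exists>U F. openin (top_of_set (coord_space I)) U \<and> S \<subseteq> U \<and>
            smooth_map I U F \<and> (\<forall>x\<in>S. F x = f x)) \<and>
     (\<exists>W G. openin (top_of_set (coord_space J)) W \<and> T \<subseteq> W \<and>
            smooth_map J W G \<and> (\<forall>y\<in>T. G y = inv_into S f y))"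

text \<open>A tensor T_(i j k_1 ... k_s) on T_(x0)X (in the basis dz) is a function of
(i, j, [k_1,...,k_s]). An r-jet of a metric at x0 is recorded by its coefficients
a(i,j,K) = d^|K| g_ij / dz_K (x0), |K| <= r.\<close>

type_synonym tensor = "nat \<times> nat \<times> nat list \<Rightarrow> real"

definition jet_index :: "nat \<Rightarrow> nat \<Rightarrow> (nat \<times> nat \<times> nat list) set" where
  "jet_index n r = {(i, j, K). i < n \<and> j < n \<and> set K \<subseteq> {..<n} \<and> length K \<le> r}"

definition bil :: "nat \<Rightarrow> (nat \<Rightarrow> nat \<Rightarrow> real) \<Rightarrow> (nat \<Rightarrow> real) \<Rightarrow> (nat \<Rightarrow> real) \<Rightarrow> real" where
  "bil n B u v = (\<Sum>i<n. \<Sum>j<n. B i j * u i * v j)"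

definition has_signature :: "nat \<Rightarrow> nat \<Rightarrow> (nat \<Rightarrow> nat \<Rightarrow> real) \<Rightarrow> bool" where
  "has_signature p q B \<longleftrightarrow>
     (\<forall>i<p+q. \<forall>j<p+q. B i j = B j i) \<and>
     (\<exists>e :: nat \<Rightarrow> nat \<Rightarrow> real.
        (\<forall>k<p+q. \<forall>l. p+q \<le> l \<longrightarrow> e k l = 0) \<and>
        (\<forall>k<p+q. \<forall>l<p+q. bil (p+q) B (e k) (e l) =
                     (if k \<noteq> l then 0 else if k < p then 1 else -1)))"

definition metric_jets :: "nat \<Rightarrow> nat \<Rightarrow> nat \<Rightarrow> tensor set" where
  "metric_jets p q r = {a.
     (\<forall>x. x \<notin> jet_index (p+q) r \<longrightarrow> a x = 0) \<and>
     (\<forall>i j K. a (i, j, K) = a (j, i, K)) \<and>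
     (\<forall>i j K K'. mset K = mset K' \<longrightarrow> a (i, j, K) = a (i, j, K')) \<and>
     has_signature p q (\<lambda>i j. a (i, j, []))}"

definition taylor :: "nat \<Rightarrow> nat \<Rightarrow> tensor \<Rightarrow> nat \<Rightarrow> nat \<Rightarrow> (nat \<Rightarrow> real) \<Rightarrow> real" where
  "taylor n r a i j z =
     (\<Sum>s\<le>r. (1 / fact s) *
        (\<Sum>K\<in>{K. length K = s \<and> set K \<subseteq> {..<n}}. a (i, j, K) * prod_list (map z K)))"

text \<open>The submanifold N^r_(x0): jets satisfying the Gauss lemma equations
sum_j g_ij z_j = sum_j g_ij(x0) z_j to the order determined by the r-jet,
i.e. identically for the order-r Taylor polynomial of g.\<close>

definition gauss_jets :: "nat \<Rightarrow> nat \<Rightarrow> nat \<Rightarrow> tensor set" where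
  "gauss_jets p q r = {a \<in> metric_jets p q r.
     \<forall>i<p+q. \<forall>z :: nat \<Rightarrow> real.
       (\<Sum>j<p+q. taylor (p+q) r a i j z * z j) = (\<Sum>j<p+q. a (i, j, []) * z j)}"

definition N0 :: "nat \<Rightarrow> nat \<Rightarrow> tensor set" where
  "N0 p q = {T. (\<forall>i j K. (K \<noteq> [] \<or> \<not> i < p+q \<or> \<not> j < p+q) \<longrightarrow> T (i, j, K) = 0) \<and>
               has_signature p q (\<lambda>i j. T (i, j, []))}"

definition Nk :: "nat \<Rightarrow> nat \<Rightarrow> tensor set" where
  "Nk n k = {T.
     (\<forall>i j K. \<not> (i < n \<and> j < n \<and> set K \<subseteq> {..<n} \<and> length K = k) \<longrightarrow> T (i, j, K) = 0) \<and>
     (\<forall>i j K. T (i, j, K) = T (j, i, K)) \<and>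
     (\<forall>i j K K'. mset K = mset K' \<longrightarrow> T (i, j, K) = T (i, j, K')) \<and>
     (\<forall>i j K. length K = k \<longrightarrow>
        (\<Sum>m\<le>k. let L = rotate m (j # K) in T (i, hd L, tl L)) = 0)}"

text \<open>The product N_0 x N_2 x ... x N_r, encoded as Phi(s, i, j, K) = (s-th factor)(i,j,K);
the slots s = 1 and s > r are identically zero.\<close>

definition prodN :: "nat \<Rightarrow> nat \<Rightarrow> nat \<Rightarrow> (nat \<times> nat \<times> nat \<times> nat list \<Rightarrow> real) set" where
  "prodN p q r = {Phi.
     (\<lambda>x. Phi (0, x)) \<in> N0 p q \<and>
     (\<forall>s. 2 \<le> s \<and> s \<le> r \<longrightarrow> (\<lambda>x. Phi (s, x)) \<in> Nk (p+q) s) \<and>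
     (\<forall>s x. (s = 1 \<or> r < s) \<longrightarrow> Phi (s, x) = 0)}"

definition prod_index :: "nat \<Rightarrow> nat \<Rightarrow> (nat \<times> nat \<times> nat \<times> nat list) set" where
  "prod_index n r = {(s, i, j, K). s \<le> r \<and> i < n \<and> j < n \<and> set K \<subseteq> {..<n} \<and> length K = s}"

definition normal_tensor :: "tensor \<Rightarrow> nat \<Rightarrow> tensor" where
  "normal_tensor a s = (\<lambda>(i, j, K). if length K = s then a (i, j, K) else 0)"

definition normal_map :: "nat \<Rightarrow> tensor \<Rightarrow> (nat \<times> nat \<times> nat \<times> nat list \<Rightarrow> real)" where
  "normal_map r a = (\<lambda>(s, x). if s = 0 \<or> (2 \<le> s \<and> s \<le> r) then normal_tensor a s x else 0)"

end

theory Submission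
  imports Defs "HOL-Combinatorics.Multiset_Permutations"
begin

(* In row i the Gauss equations say that the polynomial
     sum_j (Taylor_r g_ij)(z) z_j - sum_j g_ij(x0) z_j
   vanishes identically.  Its homogeneous part of degree s+1 is built from the s-th derivatives,
   and comparing the coefficients of the monomials z^M shows that it vanishes iff all cyclic sums
     T_(i j k_1 ... k_s) + T_(i k_s j k_1 ... k_(s-1)) + ... + T_(i k_1 ... k_s j)
   of the s-th derivative tensor vanish.  For s = 1 this, with the symmetry of g, kills the first
   derivatives; for 2 <= s <= r it is exactly the defining condition of N_s.  Hence a jet lies in
   the Gauss submanifold iff its normal tensors of orders 0, 2, ..., r lie in N_0, N_2, ..., N_r
   and all others vanish.  The map to normal tensors and its inverse, which reassembles a jet from
   its graded pieces, merely select coordinates, so both are smooth. *)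

section \<open>Polynomials indexed by words and by multisets\<close>

definition words :: "nat \<Rightarrow> nat \<Rightarrow> nat list set" where
  "words n d = {L. set L \<subseteq> {..<n} \<and> length L = d}"

definition multisets :: "nat \<Rightarrow> nat \<Rightarrow> nat multiset set" where
  "multisets n d = {M. set_mset M \<subseteq> {..<n} \<and> size M = d}"

definition monomial :: "('a \<Rightarrow> real) \<Rightarrow> 'a multiset \<Rightarrow> real" where
  "monomial z M = prod_mset (image_mset z M)"

lemma finite_words: "finite (words n d)"
  unfolding words_def using finite_lists_length_eq[of "{..<n}" d] by simp

lemma words_Suc: "words n (Suc d) = (\<lambda>(j, K). j # K) ` ({..<n} \<times> words n d)"
  unfolding words_def
proof safe
  fix L assume "set L \<subseteq> {..<n}" "length L = Suc d"
  then show "L \<in> (\<lambda>(j, K). j # K) ` ({..<n} \<times> {L. set L \<subseteq> {..<n} \<and> length L = d})"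
    by (cases L) force+
qed auto

lemma multisets_eq_mset_words: "multisets n d = mset ` words n d"
  unfolding multisets_def words_def
proof safe
  fix M assume "set_mset M \<subseteq> {..<n}"
  moreover obtain L where "mset L = M" using ex_mset by blast
  ultimately show "M \<in> mset ` {L. set L \<subseteq> {..<n} \<and> length L = size M}" by force
qed auto

lemma finite_multisets: "finite (multisets n d)"
  unfolding multisets_eq_mset_words using finite_words by simp

lemma monomial_add_mset [simp]: "monomial z (add_mset y M) = z y * monomial z M"
  by (simp add: monomial_def)

lemma monomial_mset: "monomial z (mset L) = prod_list (map z L)"
  by (simp add: monomial_def prod_mset_prod_list flip: mset_map)

lemma monomial_has_derivative:
  "((\<lambda>t. monomial (z(x := z x + t)) M) has_real_derivative
      real (count M x) * monomial z (M - {#x#})) (at 0)"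
proof (induction M)
  case empty
  then show ?case by (simp add: monomial_def)
next
  case (add y M)
  have coord: "((\<lambda>t. (z(x := z x + t)) y) has_real_derivative (if y = x then 1 else 0)) (at 0)"
  proof (cases "y = x")
    case True
    then have "(\<lambda>t. (z(x := z x + t)) y) = (\<lambda>t. z x + t)" by simp
    then show ?thesis using True by (auto intro!: derivative_eq_intros)
  next
    case False
    then have "(\<lambda>t. (z(x := z x + t)) y) = (\<lambda>t. z y)" by simp
    then show ?thesis using False by (auto intro!: derivative_eq_intros)
  qed
  have base: "z(x := z x + 0) = z" by simp
  have product_rule: "((\<lambda>t. (z(x := z x + t)) y * monomial (z(x := z x + t)) M) has_real_derivative
     (if y = x then 1 else 0) * monomial z M + z y * (real (count M x) * monomial z (M - {#x#}))) (at 0)"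
    using DERIV_mult'[OF coord add.IH] unfolding base by (subst add.commute)
  have count_identity: "(if y = x then 1 else 0) * monomial z M + z y * (real (count M x) * monomial z (M - {#x#}))
         = real (count (add_mset y M) x) * monomial z (add_mset y M - {#x#})"
  proof (cases "y = x")
    case True
    show ?thesis
    proof (cases "x \<in># M")
      case True
      then have "z x * monomial z (M - {#x#}) = monomial z M"
        by (metis insert_DiffM monomial_add_mset)
      then show ?thesis using \<open>y = x\<close> by (simp add: algebra_simps)
    qed (use \<open>y = x\<close> in \<open>simp add: not_in_iff\<close>)
  next
    case False
    then have "add_mset y M - {#x#} = add_mset y (M - {#x#})" by (metis diff_union_swap)
    then show ?thesis using False by simp
  qed
  show ?case unfolding monomial_add_mset count_identity[symmetric] by (rule product_rule)
qed

lemma multisets_Suc_containing: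
  assumes "x < n"
  shows "{M \<in> multisets n (Suc d). x \<in># M} = add_mset x ` multisets n d"
  unfolding multisets_def
proof safe
  fix M assume "set_mset M \<subseteq> {..<n}" "size M = Suc d" "x \<in># M"
  then show "M \<in> add_mset x ` {M. set_mset M \<subseteq> {..<n} \<and> size M = d}"
    by (intro image_eqI[of _ _ "M - {#x#}"]) (auto simp: size_Diff_submset dest: in_diffD)
qed (use assms in auto)

text \<open>A homogeneous polynomial (written in the monomial basis) which vanishes identically
has zero coefficients.  Induction on the degree: differentiate in a variable occurring
in the monomial.\<close>

lemma polynomial_identity_zero_coeffs:
  assumes "\<And>z. (\<Sum>M\<in>multisets n d. c M * monomial z M) = 0" "M \<in> multisets n d"
  shows "c M = 0"
  using assms
proof (induction d arbitrary: c M)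
  case 0
  have "multisets n 0 = {{#}}" unfolding multisets_def by auto
  with 0 show ?case by (simp add: monomial_def)
next
  case (Suc d)
  obtain x where x: "x \<in># M" "x < n"
    using Suc.prems(2) by (cases M) (auto simp: multisets_def)
  define c' where "c' M' = c (add_mset x M') * real (count M' x + 1)" for M'
  have "(\<Sum>M'\<in>multisets n d. c' M' * monomial z M') = 0" for z
  proof -
    have "((\<lambda>t. \<Sum>M\<in>multisets n (Suc d). c M * monomial (z(x := z x + t)) M) has_real_derivative
        (\<Sum>M\<in>multisets n (Suc d). c M * (real (count M x) * monomial z (M - {#x#})))) (at 0)"
      by (intro DERIV_sum DERIV_cmult monomial_has_derivative)
    moreover have "((\<lambda>t. \<Sum>M\<in>multisets n (Suc d). c M * monomial (z(x := z x + t)) M)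
        has_real_derivative 0) (at 0)"
      using Suc.prems(1) by simp
    ultimately have "(\<Sum>M\<in>multisets n (Suc d). c M * (real (count M x) * monomial z (M - {#x#}))) = 0"
      using DERIV_unique by blast
    also have "(\<Sum>M\<in>multisets n (Suc d). c M * (real (count M x) * monomial z (M - {#x#})))
        = (\<Sum>M\<in>{M \<in> multisets n (Suc d). x \<in># M}. c M * (real (count M x) * monomial z (M - {#x#})))"
      by (intro sum.mono_neutral_right finite_multisets) (auto simp: not_in_iff)
    also have "\<dots> = (\<Sum>M'\<in>multisets n d. c' M' * monomial z M')"
      unfolding multisets_Suc_containing[OF x(2)]
      by (subst sum.reindex) (auto simp: inj_on_def c'_def mult.assoc)
    finally show ?thesis .
  qed
  moreover have "M - {#x#} \<in> multisets n d"
    using Suc.prems(2) x by (auto simp: multisets_def size_Diff_submset dest: in_diffD)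
  ultimately have "c' (M - {#x#}) = 0" by (rule Suc.IH)
  moreover have "count M x \<noteq> 0" using x by simp
  ultimately show ?case by (simp add: c'_def)
qed

lemma sum_words_by_multisets:
  "(\<Sum>L\<in>words n d. c L * prod_list (map z L))
     = (\<Sum>M\<in>multisets n d. (\<Sum>L\<in>permutations_of_multiset M. c L) * monomial z M)"
proof -
  have "(\<Sum>L\<in>words n d. c L * prod_list (map z L))
      = (\<Sum>M\<in>multisets n d. \<Sum>L\<in>{L \<in> words n d. mset L = M}. c L * prod_list (map z L))"
    by (rule sum.group[symmetric]) (auto simp: finite_words finite_multisets multisets_eq_mset_words)
  also have "\<dots> = (\<Sum>M\<in>multisets n d. (\<Sum>L\<in>permutations_of_multiset M. c L) * monomial z M)"
  proof (intro sum.cong refl)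
    fix M assume "M \<in> multisets n d"
    then have "{L \<in> words n d. mset L = M} = permutations_of_multiset M"
      by (auto simp: words_def multisets_def permutations_of_multiset_def)
    then show "(\<Sum>L\<in>{L \<in> words n d. mset L = M}. c L * prod_list (map z L))
             = (\<Sum>L\<in>permutations_of_multiset M. c L) * monomial z M"
      by (simp add: sum_distrib_right permutations_of_multiset_def flip: monomial_mset)
  qed
  finally show ?thesis .
qed

lemma word_polynomial_homogeneous:
  fixes t :: real
  shows "(\<Sum>L\<in>words n d. c L * prod_list (map (\<lambda>k. t * z k) L))
     = t ^ d * (\<Sum>L\<in>words n d. c L * prod_list (map z L))"
proof -
  have "prod_list (map (\<lambda>k. t * z k) L) = t ^ length L * prod_list (map z L)" for L
    by (induction L) (auto simp: mult_ac)
  then show ?thesis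
    unfolding sum_distrib_left words_def by (intro sum.cong) (simp_all add: mult_ac)
qed

text \<open>If a finite sum of homogeneous functions of distinct degrees vanishes identically,
then so does each summand (compare coefficients along the rays t z).\<close>

lemma homogeneous_parts_vanish:
  fixes P :: "nat \<Rightarrow> ('a \<Rightarrow> real) \<Rightarrow> real"
  assumes A: "finite A" "d \<in> A"
    and hom: "\<And>e t z. e \<in> A \<Longrightarrow> P e (\<lambda>k. t * z k) = t ^ e * P e z"
    and zero: "\<And>z. (\<Sum>e\<in>A. P e z) = 0"
  shows "P d z = 0"
proof -
  define c where "c e = (if e \<in> A then P e z else 0)" for e
  have "(\<Sum>e\<le>Max A. c e * t ^ e) = 0" for t
  proof -
    have "(\<Sum>e\<le>Max A. c e * t ^ e) = (\<Sum>e\<in>A. P e z * t ^ e)"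
      using A by (intro sum.mono_neutral_cong_right) (auto simp: c_def)
    also have "\<dots> = (\<Sum>e\<in>A. P e (\<lambda>k. t * z k))"
      by (simp add: hom mult.commute)
    finally show ?thesis using zero by simp
  qed
  then have "c d = 0"
    by (rule zero_polynom_imp_zero_coeffs) (use A in simp)
  then show ?thesis using A by (simp add: c_def)
qed

section \<open>Cyclic sums and the Gauss lemma equations\<close>

lemma sum_list_as_count_sum:
  fixes f :: "'a \<Rightarrow> 'b::comm_semiring_1"
  shows "sum_list (map f xs) = (\<Sum>x\<in>set xs. of_nat (count_list xs x) * f x)"
proof (induction xs)
  case (Cons y xs)
  have drop_y: "(\<Sum>x\<in>insert y (set xs). of_nat (count_list xs x) * f x)
      = (\<Sum>x\<in>set xs. of_nat (count_list xs x) * f x)"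
    by (cases "y \<in> set xs") (simp_all add: insert_absorb count_list_0_iff)
  have "(\<Sum>x\<in>set (y # xs). of_nat (count_list (y # xs) x) * f x)
      = (\<Sum>x\<in>insert y (set xs). of_nat (count_list xs x) * f x + (if x = y then f x else 0))"
    by (intro sum.cong) (auto simp: algebra_simps)
  also have "\<dots> = (\<Sum>x\<in>set xs. of_nat (count_list xs x) * f x) + f y"
    by (simp add: sum.distrib drop_y)
  finally show ?case using Cons.IH by (simp add: add.commute)
qed simp

lemma mset_rotate [simp]: "mset (rotate n xs) = mset xs"
proof -
  have "mset (rotate1 ys) = mset ys" for ys :: "'a list" by (cases ys) auto
  then show ?thesis by (induction n) (simp_all add: rotate_Suc)
qed

definition cyclic_sum :: "tensor \<Rightarrow> nat \<Rightarrow> nat \<Rightarrow> nat list \<Rightarrow> real" where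
  "cyclic_sum T i j K = (\<Sum>m\<le>length K. let L = rotate m (j # K) in T (i, hd L, tl L))"

lemma cyclic_sum_singleton: "cyclic_sum T i j [k] = T (i, j, [k]) + T (i, k, [j])"
proof -
  have "{..length [k]} = {0, Suc 0}" by auto
  then show ?thesis by (simp add: cyclic_sum_def)
qed

lemma cyclic_sum_as_list_sum:
  fixes T :: tensor
  assumes symK: "\<And>j K K'. mset K = mset K' \<Longrightarrow> T (i, j, K) = T (i, j, K')"
  shows "cyclic_sum T i j K = sum_list (map (\<lambda>x. T (i, x, remove1 x (j # K))) (j # K))"
proof -
  let ?L = "j # K"
  have "cyclic_sum T i j K = (\<Sum>m<length ?L. T (i, ?L ! m, remove1 (?L ! m) ?L))"
    unfolding cyclic_sum_def
  proof (rule sum.cong)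
    fix m assume "m \<in> {..<length ?L}"
    then have hd: "hd (rotate m ?L) = ?L ! m"
      by (simp add: hd_rotate_conv_nth)
    have "mset (tl (rotate m ?L)) = mset (remove1 (?L ! m) ?L)"
      by (simp add: mset_tl mset_remove1 flip: hd)
    then show "(let L = rotate m ?L in T (i, hd L, tl L)) = T (i, ?L ! m, remove1 (?L ! m) ?L)"
      unfolding Let_def hd by (rule symK)
  qed auto
  also have "\<dots> = (\<Sum>m<length ?L. map (\<lambda>x. T (i, x, remove1 x ?L)) ?L ! m)"
    by (intro sum.cong refl) (auto simp only: nth_map lessThan_iff)
  also have "\<dots> = sum_list (map (\<lambda>x. T (i, x, remove1 x ?L)) ?L)"
    by (simp only: sum_list_sum_nth length_map atLeast0LessThan)
  finally show ?thesis .
qed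

text \<open>Summing T(i, hd L', tl L') over all arrangements L' of the multiset of L gives a positive
multiple of the same list sum (the coefficient of z^M in the Gauss polynomial).\<close>

lemma arrangement_sum_eq:
  fixes T :: tensor
  assumes symK: "\<And>j K K'. mset K = mset K' \<Longrightarrow> T (i, j, K) = T (i, j, K')"
    and L: "mset L = M" "L \<noteq> []"
  shows "(\<Sum>L'\<in>permutations_of_multiset M. T (i, hd L', tl L'))
       = real (card (permutations_of_multiset M)) / real (length L)
            * sum_list (map (\<lambda>x. T (i, x, remove1 x L)) L)"
proof -
  let ?c = "real (card (permutations_of_multiset M)) / real (length L)"
  have M: "M \<noteq> {#}" "size M = length L" using L by auto
  have "(\<Sum>L'\<in>permutations_of_multiset M. T (i, hd L', tl L'))
      = (\<Sum>x\<in>set_mset M. \<Sum>L'\<in>(#) x ` permutations_of_multiset (M - {#x#}). T (i, hd L', tl L'))"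
    unfolding permutations_of_multiset_nonempty[OF M(1)] by (rule sum.UNION_disjoint) auto
  also have "\<dots> = (\<Sum>x\<in>set_mset M. \<Sum>K\<in>permutations_of_multiset (M - {#x#}). T (i, x, K))"
    by (rule sum.cong[OF refl]) (simp add: sum.reindex[OF inj_on_Cons1])
  also have "\<dots> = (\<Sum>x\<in>set_mset M. real (card (permutations_of_multiset (M - {#x#}))) * T (i, x, remove1 x L))"
  proof (intro sum.cong refl)
    fix x
    have "T (i, x, K) = T (i, x, remove1 x L)" if "K \<in> permutations_of_multiset (M - {#x#})" for K
      using that L by (intro symK) (auto simp: permutations_of_multiset_def mset_remove1)
    then show "(\<Sum>K\<in>permutations_of_multiset (M - {#x#}). T (i, x, K))
             = real (card (permutations_of_multiset (M - {#x#}))) * T (i, x, remove1 x L)"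
      by simp
  qed
  also have "\<dots> = (\<Sum>x\<in>set_mset M. ?c * (real (count M x) * T (i, x, remove1 x L)))"
    using M(2) by (intro sum.cong refl) (simp add: real_card_permutations_of_multiset_remove)
  also have "\<dots> = ?c * sum_list (map (\<lambda>x. T (i, x, remove1 x L)) L)"
    unfolding sum_list_as_count_sum L(1)[symmetric] by (simp add: sum_distrib_left count_mset)
  finally show ?thesis .
qed

text \<open>The degree d part of the Gauss polynomial of row i: the sum over words L of length d of
a(i, L_0, L_1 ... L_(d-1)) z^L, i.e. sum_j (d-1 th Taylor term of a_ij) z_j up to the factor (d-1)!.\<close>

definition gauss_form :: "nat \<Rightarrow> tensor \<Rightarrow> nat \<Rightarrow> nat \<Rightarrow> (nat \<Rightarrow> real) \<Rightarrow> real" where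
  "gauss_form n a i d z = (\<Sum>L\<in>words n d. a (i, hd L, tl L) * prod_list (map z L))"

lemma gauss_form_zero_iff:
  fixes a :: tensor
  assumes symK: "\<And>j K K'. mset K = mset K' \<Longrightarrow> a (i, j, K) = a (i, j, K')"
  shows "(\<forall>z. gauss_form n a i (Suc s) z = 0) \<longleftrightarrow>
         (\<forall>j<n. \<forall>K\<in>words n s. cyclic_sum a i j K = 0)"
proof -
  define coeff where "coeff M = (\<Sum>L\<in>permutations_of_multiset M. a (i, hd L, tl L))" for M
  have form: "gauss_form n a i (Suc s) z = (\<Sum>M\<in>multisets n (Suc s). coeff M * monomial z M)" for z
    unfolding gauss_form_def coeff_def by (rule sum_words_by_multisets)
  have coeff: "coeff (mset (j # K)) = 0 \<longleftrightarrow> cyclic_sum a i j K = 0" for j K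
  proof -
    have "real (card (permutations_of_multiset (mset (j # K)))) / real (length (j # K)) \<noteq> 0"
      by (simp add: card_gt_0_iff)
    moreover have "coeff (mset (j # K)) = real (card (permutations_of_multiset (mset (j # K))))
        / real (length (j # K)) * sum_list (map (\<lambda>x. a (i, x, remove1 x (j # K))) (j # K))"
      unfolding coeff_def by (rule arrangement_sum_eq[where T = a and i = i, OF symK]) simp_all
    ultimately show ?thesis
      by (simp add: cyclic_sum_as_list_sum[where T = a and i = i, OF symK] del: mset.simps)
  qed
  have multisets: "M \<in> multisets n (Suc s) \<longleftrightarrow> (\<exists>j<n. \<exists>K\<in>words n s. M = mset (j # K))" for M
    unfolding multisets_eq_mset_words words_Suc by (auto simp del: mset.simps)
  show ?thesis
  proof
    assume "\<forall>z. gauss_form n a i (Suc s) z = 0"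
    then have "coeff M = 0" if "M \<in> multisets n (Suc s)" for M
      using polynomial_identity_zero_coeffs[OF _ that] form by metis
    then show "\<forall>j<n. \<forall>K\<in>words n s. cyclic_sum a i j K = 0"
      using multisets coeff by blast
  next
    assume cyclic: "\<forall>j<n. \<forall>K\<in>words n s. cyclic_sum a i j K = 0"
    have "coeff M = 0" if M: "M \<in> multisets n (Suc s)" for M
    proof -
      obtain j K where jK: "j < n" "K \<in> words n s" and M_eq: "M = mset (j # K)"
        using M multisets by blast
      have "cyclic_sum a i j K = 0" using cyclic jK by blast
      then show ?thesis unfolding M_eq coeff .
    qed
    then show "\<forall>z. gauss_form n a i (Suc s) z = 0" by (simp add: form)
  qed
qed

lemma gauss_form_Suc:
  "gauss_form n a i (Suc s) z = (\<Sum>j<n. (\<Sum>K\<in>words n s. a (i, j, K) * prod_list (map z K)) * z j)"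
proof -
  have "(\<Sum>j<n. (\<Sum>K\<in>words n s. a (i, j, K) * prod_list (map z K)) * z j)
      = (\<Sum>(j, K)\<in>{..<n} \<times> words n s. a (i, j, K) * prod_list (map z (j # K)))"
    by (simp add: sum_distrib_left sum_distrib_right mult_ac flip: sum.cartesian_product)
  also have "\<dots> = gauss_form n a i (Suc s) z"
    unfolding gauss_form_def words_Suc by (subst sum.reindex) (auto simp: inj_on_def intro!: sum.cong)
  finally show ?thesis by simp
qed

lemma degrees_Suc: "{2..Suc r} = Suc ` {1..r}"
  by (simp add: numeral_2_eq_2)

lemma gauss_defect_eq:
  "(\<Sum>j<n. taylor n r a i j z * z j) - (\<Sum>j<n. a (i, j, []) * z j)
     = (\<Sum>d\<in>{2..Suc r}. gauss_form n a i d z / fact (d - 1))"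
proof -
  define X where "X j s = (\<Sum>K\<in>words n s. a (i, j, K) * prod_list (map z K))" for j s
  have taylor: "taylor n r a i j z = a (i, j, []) + (\<Sum>s\<in>{1..r}. X j s / fact s)" for j
  proof -
    have "{K. length K = s \<and> set K \<subseteq> {..<n}} = words n s" for s by (auto simp: words_def)
    moreover have "words n 0 = {[]}" by (auto simp: words_def)
    moreover have "{..r} = insert 0 {1..r}" by auto
    ultimately show ?thesis unfolding taylor_def X_def by simp
  qed
  have "(\<Sum>j<n. taylor n r a i j z * z j) - (\<Sum>j<n. a (i, j, []) * z j)
      = (\<Sum>s\<in>{1..r}. (\<Sum>j<n. X j s * z j) / fact s)"
    unfolding taylor sum_subtractf[symmetric] left_diff_distrib[symmetric]
    by (simp add: sum_distrib_right sum_divide_distrib sum.swap[of _ "{..<n}"])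
  also have "\<dots> = (\<Sum>s\<in>{1..r}. gauss_form n a i (Suc s) z / fact s)"
    by (simp add: gauss_form_Suc X_def)
  also have "\<dots> = (\<Sum>d\<in>{2..Suc r}. gauss_form n a i d z / fact (d - 1))"
    unfolding degrees_Suc by (rule sym, rule sum.reindex_cong[of Suc]) auto
  finally show ?thesis .
qed

lemma gauss_equations_iff_cyclic_sums:
  fixes a :: tensor
  assumes symK: "\<And>j K K'. mset K = mset K' \<Longrightarrow> a (i, j, K) = a (i, j, K')"
  shows "(\<forall>z. (\<Sum>j<n. taylor n r a i j z * z j) = (\<Sum>j<n. a (i, j, []) * z j)) \<longleftrightarrow>
         (\<forall>s\<in>{1..r}. \<forall>j<n. \<forall>K\<in>words n s. cyclic_sum a i j K = 0)"
proof -
  have "(\<forall>z. (\<Sum>j<n. taylor n r a i j z * z j) = (\<Sum>j<n. a (i, j, []) * z j)) \<longleftrightarrow>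
        (\<forall>z. (\<Sum>d\<in>{2..Suc r}. gauss_form n a i d z / fact (d - 1)) = 0)"
    unfolding gauss_defect_eq[symmetric] by simp
  also have "\<dots> \<longleftrightarrow> (\<forall>d\<in>{2..Suc r}. \<forall>z. gauss_form n a i d z = 0)"
  proof
    assume zero: "\<forall>z. (\<Sum>d\<in>{2..Suc r}. gauss_form n a i d z / fact (d - 1)) = 0"
    have "gauss_form n a i d z / fact (d - 1) = 0" if "d \<in> {2..Suc r}" for d z
      by (rule homogeneous_parts_vanish[where P = "\<lambda>d z. gauss_form n a i d z / fact (d - 1)",
            OF _ that _ zero[rule_format]])
        (simp_all add: gauss_form_def word_polynomial_homogeneous)
    then show "\<forall>d\<in>{2..Suc r}. \<forall>z. gauss_form n a i d z = 0" by simp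
  qed simp
  also have "\<dots> \<longleftrightarrow> (\<forall>s\<in>{1..r}. \<forall>z. gauss_form n a i (Suc s) z = 0)"
    by (simp only: degrees_Suc ball_simps(9))
  also have "\<dots> \<longleftrightarrow> (\<forall>s\<in>{1..r}. \<forall>j<n. \<forall>K\<in>words n s. cyclic_sum a i j K = 0)"
    using gauss_form_zero_iff[where a = a and i = i, OF symK] by blast
  finally show ?thesis .
qed

lemma first_derivatives_vanish:
  fixes a :: tensor
  assumes sym: "\<And>i j K. a (i, j, K) = a (j, i, K)"
    and cyc: "\<And>i j k. a (i, j, [k]) + a (i, k, [j]) = 0"
  shows "a (i, j, [k]) = 0"
proof -
  have "a (i, j, [k]) + a (i, k, [j]) = 0" "a (k, i, [j]) + a (k, j, [i]) = 0"
       "a (j, k, [i]) + a (j, i, [k]) = 0" by (rule cyc)+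
  moreover have "a (i, k, [j]) = a (k, i, [j])" "a (k, j, [i]) = a (j, k, [i])"
       "a (j, i, [k]) = a (i, j, [k])" by (rule sym)+
  ultimately show ?thesis by linarith
qed

section \<open>Coordinate selections are smooth\<close>

lemma pd_coordinate: "pd a (\<lambda>x. x c) = (\<lambda>x. if a = c then 1 else 0)"
proof
  fix x :: "'a \<Rightarrow> real"
  have "((\<lambda>t. (x(a := x a + t)) c) has_real_derivative (if a = c then 1 else 0)) (at 0)"
  proof (cases "a = c")
    case True
    then have "(\<lambda>t. (x(a := x a + t)) c) = (\<lambda>t. x a + t)" by auto
    then show ?thesis using True by (auto intro!: derivative_eq_intros)
  next
    case False
    then have "(\<lambda>t. (x(a := x a + t)) c) = (\<lambda>t. x c)" by auto
    then show ?thesis using False by (auto intro!: derivative_eq_intros)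
  qed
  then show "pd a (\<lambda>x. x c) x = (if a = c then 1 else 0)"
    unfolding pd_def by (rule DERIV_imp_deriv)
qed

lemma pd_const: "pd a (\<lambda>x. k) = (\<lambda>x. 0)"
  unfolding pd_def by (intro ext DERIV_imp_deriv) (auto intro!: derivative_eq_intros)

definition coordinate_or_const :: "(('a \<Rightarrow> real) \<Rightarrow> real) \<Rightarrow> bool" where
  "coordinate_or_const F \<longleftrightarrow> (\<exists>c. F = (\<lambda>x. x c)) \<or> (\<exists>k. F = (\<lambda>x. k))"

lemma coordinate_or_const_ipd:
  assumes "coordinate_or_const F"
  shows "coordinate_or_const (ipd as F)"
proof (induction as)
  case (Cons b as)
  then show ?case
    by (auto simp: coordinate_or_const_def pd_coordinate pd_const)
qed (use assms in simp)

lemma coordinate_or_const_regular: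
  assumes "coordinate_or_const G"
  shows "continuous_on U G" and "(\<lambda>t. G (x(a := x a + t))) differentiable at 0"
proof -
  have G: "(\<exists>c. G = (\<lambda>x. x c)) \<or> (\<exists>k. G = (\<lambda>x. k))"
    using assms unfolding coordinate_or_const_def .
  then show "continuous_on U G"
    by (auto intro: continuous_on_subset[OF continuous_on_product_coordinates])
  have "(\<lambda>t. (x(a := x a + t)) c) = (if a = c then (\<lambda>t. x a + t) else (\<lambda>t. x c))" for c
    by auto
  then show "(\<lambda>t. G (x(a := x a + t))) differentiable at 0"
    using G by auto
qed

lemma smooth_fun_coordinate_or_const:
  assumes "coordinate_or_const F"
  shows "smooth_fun I U F"
  unfolding smooth_fun_def
  using coordinate_or_const_regular[OF coordinate_or_const_ipd[OF assms]] by blast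

definition coordinate_selection :: "(('a \<Rightarrow> real) \<Rightarrow> ('b \<Rightarrow> real)) \<Rightarrow> bool" where
  "coordinate_selection F \<longleftrightarrow> (\<forall>b. (\<exists>c. \<forall>x. F x b = x c) \<or> (\<forall>x. F x b = 0))"

lemma smooth_map_coordinate_selection:
  assumes "coordinate_selection F"
  shows "smooth_map I U F"
  unfolding smooth_map_def
proof
  fix b
  have "coordinate_or_const (\<lambda>x. F x b)"
    using assms unfolding coordinate_selection_def coordinate_or_const_def by (metis ext)
  then show "smooth_fun I U (\<lambda>x. F x b)" by (rule smooth_fun_coordinate_or_const)
qed

text \<open>A bijection between subsets of coordinate spaces which, together with its inverse,
is given by coordinate selections is a diffeomorphism (the extensions are the selections
themselves on the whole coordinate spaces).\<close>

lemma diffeo_coordinate_selections: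
  assumes "finite I" "finite J" and S: "S \<subseteq> coord_space I" and T: "T \<subseteq> coord_space J"
    and sel: "coordinate_selection f" "coordinate_selection g"
    and maps: "f ` S \<subseteq> T" "g ` T \<subseteq> S"
    and inverse: "\<And>x. x \<in> S \<Longrightarrow> g (f x) = x" "\<And>y. y \<in> T \<Longrightarrow> f (g y) = y"
  shows "diffeo I J f S T"
proof -
  have bij: "bij_betw f S T"
    using maps inverse by (intro bij_betw_byWitness[where f' = g]) auto
  have "g y = inv_into S f y" if "y \<in> T" for y
    using bij_betw_imp_inj_on[OF bij] maps(2) inverse that by (metis image_subset_iff inv_into_f_eq)
  moreover have "smooth_map I (coord_space I) f" "smooth_map J (coord_space J) g"
    using sel by (simp_all add: smooth_map_coordinate_selection)
  ultimately show ?thesis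
    unfolding diffeo_def using assms(1-4) bij
    by (intro conjI exI[of _ "coord_space I"] exI[of _ f] exI[of _ "coord_space J"] exI[of _ g]
        openin_subtopology_self ballI refl) simp_all
qed

section \<open>The factors N_0, N_s and the graded description of Gauss jets\<close>

definition factor :: "nat \<Rightarrow> nat \<Rightarrow> nat \<Rightarrow> nat \<Rightarrow> tensor set" where
  "factor p q r s =
     (if s = 0 then N0 p q else if 2 \<le> s \<and> s \<le> r then Nk (p + q) s else {\<lambda>_. 0})"

lemma prodN_iff_factors: "Phi \<in> prodN p q r \<longleftrightarrow> (\<forall>s. (\<lambda>x. Phi (s, x)) \<in> factor p q r s)"
proof -
  have "(\<lambda>x. Phi (s, x)) \<in> factor p q r s \<longleftrightarrow>
        (s = 0 \<longrightarrow> (\<lambda>x. Phi (s, x)) \<in> N0 p q) \<and>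
        (2 \<le> s \<and> s \<le> r \<longrightarrow> (\<lambda>x. Phi (s, x)) \<in> Nk (p + q) s) \<and>
        (s = 1 \<or> r < s \<longrightarrow> (\<forall>x. Phi (s, x) = 0))" for s
    by (cases "s = 1") (auto simp: factor_def fun_eq_iff)
  then show ?thesis unfolding prodN_def by auto
qed

lemma Nk_cyclic_iff:
  "(\<forall>i j K. length K = k \<longrightarrow> (\<Sum>m\<le>k. let L = rotate m (j # K) in T (i, hd L, tl L)) = 0)
     \<longleftrightarrow> (\<forall>i j K. length K = k \<longrightarrow> cyclic_sum T i j K = 0)"
  unfolding cyclic_sum_def by (intro iff_allI) (metis (no_types, lifting))

lemma NkD:
  assumes "T \<in> Nk n k"
  shows Nk_support: "\<And>i j K. \<not> (i < n \<and> j < n \<and> set K \<subseteq> {..<n} \<and> length K = k) \<Longrightarrow> T (i, j, K) = 0"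
    and Nk_sym: "\<And>i j K. T (i, j, K) = T (j, i, K)"
    and Nk_msym: "\<And>i j K K'. mset K = mset K' \<Longrightarrow> T (i, j, K) = T (i, j, K')"
    and Nk_cyclic_sum: "\<And>i j K. length K = k \<Longrightarrow> cyclic_sum T i j K = 0"
  using assms unfolding Nk_def mem_Collect_eq Nk_cyclic_iff by blast+

lemma NkI:
  assumes "\<And>i j K. \<not> (i < n \<and> j < n \<and> set K \<subseteq> {..<n} \<and> length K = k) \<Longrightarrow> T (i, j, K) = 0"
    and "\<And>i j K. T (i, j, K) = T (j, i, K)"
    and "\<And>i j K K'. mset K = mset K' \<Longrightarrow> T (i, j, K) = T (i, j, K')"
    and "\<And>i j K. length K = k \<Longrightarrow> cyclic_sum T i j K = 0"
  shows "T \<in> Nk n k"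
  using assms unfolding Nk_def mem_Collect_eq Nk_cyclic_iff by blast

lemma factor_cases:
  assumes "T \<in> factor p q r s"
  obtains "s = 0" "T \<in> N0 p q"
    | "2 \<le> s" "s \<le> r" "T \<in> Nk (p + q) s"
    | "s = 1 \<or> r < s" "T = (\<lambda>_. 0)"
  using assms unfolding factor_def by (auto split: if_splits)

lemma factor_support:
  assumes "T \<in> factor p q r s" "T (i, j, K) \<noteq> 0"
  shows "(s, i, j, K) \<in> prod_index (p + q) r"
  using assms(1)
proof (cases rule: factor_cases)
  case 1
  then have "K = [] \<and> i < p + q \<and> j < p + q" using assms(2) unfolding N0_def by blast
  then show ?thesis using 1 by (simp add: prod_index_def)
next
  case 2
  then show ?thesis using assms(2) Nk_support[OF 2(3)] by (auto simp: prod_index_def)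
qed (use assms(2) in simp)

lemma factor_sym:
  assumes "T \<in> factor p q r s"
  shows "T (i, j, K) = T (j, i, K)"
  using assms
proof (cases rule: factor_cases)
  case 1
  then show ?thesis unfolding N0_def has_signature_def
    by (cases "K = [] \<and> i < p + q \<and> j < p + q") auto
qed (simp_all add: Nk_sym)

lemma factor_msym:
  assumes "T \<in> factor p q r s" "mset K = mset K'"
  shows "T (i, j, K) = T (i, j, K')"
  using assms(1)
proof (cases rule: factor_cases)
  case 1
  moreover have "K = [] \<longleftrightarrow> K' = []" using assms(2) by (metis mset_zero_iff)
  ultimately show ?thesis unfolding N0_def by (cases "K = []") auto
next
  case 2
  then show ?thesis using Nk_msym assms(2) by blast
qed simp

lemma factor_cyclic_sum:
  assumes "T \<in> factor p q r s" "1 \<le> s" "length K = s"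
  shows "cyclic_sum T i j K = 0"
  using assms(1)
proof (cases rule: factor_cases)
  case 2
  then show ?thesis using Nk_cyclic_sum assms(3) by blast
qed (use assms(2) in \<open>simp_all add: cyclic_sum_def\<close>)

text \<open>The terms of a cyclic sum only involve tails of the length of K, so a cyclic sum of
a jet only sees the normal tensor of that order.\<close>

lemma cyclic_sum_normal_tensor:
  "cyclic_sum (normal_tensor a (length K)) i j K = cyclic_sum a i j K"
  by (simp add: cyclic_sum_def normal_tensor_def Let_def)

lemma cyclic_sum_outside:
  assumes zero: "\<And>i j K. \<not> (i < n \<and> j < n \<and> set K \<subseteq> {..<n}) \<Longrightarrow> T (i, j, K) = 0"
    and out: "\<not> (i < n \<and> j < n \<and> set K \<subseteq> {..<n})"
  shows "cyclic_sum T i j K = 0"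
  unfolding cyclic_sum_def Let_def
proof (intro sum.neutral ballI)
  fix m
  let ?L = "rotate m (j # K)"
  have "set (hd ?L # tl ?L) = set (j # K)"
    using hd_Cons_tl[of ?L] by simp
  then have "hd ?L < n \<and> set (tl ?L) \<subseteq> {..<n} \<longleftrightarrow> j < n \<and> set K \<subseteq> {..<n}"
    by (metis insert_subset lessThan_iff list.simps(15))
  then show "T (i, hd ?L, tl ?L) = 0" using out by (intro zero) blast
qed

lemma gauss_jetsD:
  assumes "a \<in> gauss_jets p q r"
  shows gauss_jet_zero: "\<And>x. x \<notin> jet_index (p + q) r \<Longrightarrow> a x = 0"
    and gauss_jet_sym: "\<And>i j K. a (i, j, K) = a (j, i, K)"
    and gauss_jet_msym: "\<And>i j K K'. mset K = mset K' \<Longrightarrow> a (i, j, K) = a (i, j, K')"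
    and gauss_jet_signature: "has_signature p q (\<lambda>i j. a (i, j, []))"
    and gauss_jet_equations: "\<forall>i<p + q. \<forall>z. (\<Sum>j<p + q. taylor (p + q) r a i j z * z j)
                                           = (\<Sum>j<p + q. a (i, j, []) * z j)"
  using assms unfolding gauss_jets_def metric_jets_def by blast+

lemma gauss_jet_cyclic_sums:
  assumes a: "a \<in> gauss_jets p q r" and K: "1 \<le> length K" "length K \<le> r"
  shows "cyclic_sum a i j K = 0"
proof (cases "i < p + q \<and> j < p + q \<and> set K \<subseteq> {..<p + q}")
  case True
  then have "\<forall>s\<in>{1..r}. \<forall>j<p + q. \<forall>K\<in>words (p + q) s. cyclic_sum a i j K = 0"
    using gauss_jet_equations[OF a]
      gauss_equations_iff_cyclic_sums[where a = a and i = i, OF gauss_jet_msym[OF a]]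
    by blast
  moreover have "length K \<in> {1..r}" "K \<in> words (p + q) (length K)"
    using K True by (auto simp: words_def)
  ultimately show ?thesis using True by blast
next
  case False
  show ?thesis
    by (rule cyclic_sum_outside[OF _ False], rule gauss_jet_zero[OF a]) (auto simp: jet_index_def)
qed

lemma gauss_jet_first_order:
  assumes a: "a \<in> gauss_jets p q r"
  shows "a (i, j, [k]) = 0"
proof (cases "1 \<le> r")
  case True
  have "a (i', j', [k']) + a (i', k', [j']) = 0" for i' j' k'
    using gauss_jet_cyclic_sums[OF a, of "[k']" i' j'] True by (simp add: cyclic_sum_singleton)
  then show ?thesis by (rule first_derivatives_vanish[where a = a, OF gauss_jet_sym[OF a]])
next
  case False
  then show ?thesis by (intro gauss_jet_zero[OF a]) (simp add: jet_index_def)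
qed

lemma normal_tensor_length [simp]: "normal_tensor a (length K) (i, j, K) = a (i, j, K)"
  by (simp add: normal_tensor_def)

lemma normal_tensor_gauss_jet:
  assumes a: "a \<in> gauss_jets p q r"
  shows "normal_tensor a s \<in> factor p q r s"
proof -
  have zero: "normal_tensor a s (i, j, K) = 0" if "(i, j, K) \<notin> jet_index (p + q) r \<or> length K \<noteq> s" for i j K
    using that gauss_jet_zero[OF a] by (auto simp: normal_tensor_def)
  consider "s = 0" | "s = 1" | "2 \<le> s" "s \<le> r" | "r < s" by linarith
  then show ?thesis
  proof cases
    case 1
    have "has_signature p q (\<lambda>i j. normal_tensor a 0 (i, j, []))"
      using gauss_jet_signature[OF a] by (simp add: normal_tensor_def)
    then show ?thesis using 1 zero by (auto simp: factor_def N0_def jet_index_def)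
  next
    case 2
    have "normal_tensor a 1 (i, j, K) = 0" for i j K
      using gauss_jet_first_order[OF a] by (auto simp: normal_tensor_def length_Suc_conv)
    then show ?thesis using 2 by (auto simp: factor_def fun_eq_iff)
  next
    case 3
    have "normal_tensor a s \<in> Nk (p + q) s"
    proof (rule NkI)
      show "normal_tensor a s (i, j, K) = 0" if "\<not> (i < p + q \<and> j < p + q \<and> set K \<subseteq> {..<p + q} \<and> length K = s)" for i j K
        using that 3 zero by (auto simp: jet_index_def)
      show "normal_tensor a s (i, j, K) = normal_tensor a s (j, i, K)" for i j K
        using gauss_jet_sym[OF a] by (simp add: normal_tensor_def)
      show "normal_tensor a s (i, j, K) = normal_tensor a s (i, j, K')" if "mset K = mset K'" for i j K K'
        using that gauss_jet_msym[OF a, OF that] by (auto simp: normal_tensor_def dest: mset_eq_length)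
      show "cyclic_sum (normal_tensor a s) i j K = 0" if "length K = s" for i j K
        using that 3 gauss_jet_cyclic_sums[OF a] cyclic_sum_normal_tensor by (metis le_trans one_le_numeral)
    qed
    then show ?thesis using 3 by (simp add: factor_def)
  next
    case 4
    then show ?thesis using zero by (auto simp: factor_def fun_eq_iff jet_index_def)
  qed
qed

lemma gauss_jet_normal_tensors:
  assumes graded: "\<And>s. normal_tensor a s \<in> factor p q r s"
  shows "a \<in> gauss_jets p q r"
proof -
  have zero: "a x = 0" if "x \<notin> jet_index (p + q) r" for x
  proof (rule ccontr)
    obtain i j K where x: "x = (i, j, K)" by (cases x)
    assume "a x \<noteq> 0"
    then have "(length K, i, j, K) \<in> prod_index (p + q) r"
      using factor_support[OF graded] unfolding x by simp
    then show False using that x by (simp add: prod_index_def jet_index_def)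
  qed
  have sym: "a (i, j, K) = a (j, i, K)" for i j K
    using factor_sym[OF graded] normal_tensor_length by metis
  have msym: "a (i, j, K) = a (i, j, K')" if "mset K = mset K'" for i j K K'
    using factor_msym[OF graded that] normal_tensor_length mset_eq_length[OF that] by metis
  have signature: "has_signature p q (\<lambda>i j. a (i, j, []))"
    using graded[of 0] by (simp add: factor_def N0_def normal_tensor_def)
  have "cyclic_sum a i j K = 0" if "1 \<le> length K" for i j K
    using factor_cyclic_sum[OF graded that refl] cyclic_sum_normal_tensor by metis
  then have "\<forall>z. (\<Sum>j<p + q. taylor (p + q) r a i j z * z j) = (\<Sum>j<p + q. a (i, j, []) * z j)" for i
    using gauss_equations_iff_cyclic_sums[where a = a and i = i, OF msym] by (auto simp: words_def)
  then show ?thesis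
    unfolding gauss_jets_def metric_jets_def using zero sym msym signature by blast
qed

theorem gauss_jets_iff_normal_tensors:
  "a \<in> gauss_jets p q r \<longleftrightarrow> (\<forall>s. normal_tensor a s \<in> factor p q r s)"
  using normal_tensor_gauss_jet gauss_jet_normal_tensors by blast

definition assemble_jet :: "(nat \<times> nat \<times> nat \<times> nat list \<Rightarrow> real) \<Rightarrow> tensor" where
  "assemble_jet Phi = (\<lambda>(i, j, K). Phi (length K, i, j, K))"

lemma normal_map_eq:
  assumes graded: "\<And>s. normal_tensor a s \<in> factor p q r s"
  shows "normal_map r a = (\<lambda>(s, x). normal_tensor a s x)"
proof -
  have "normal_tensor a s = (\<lambda>_. 0)" if "\<not> (s = 0 \<or> 2 \<le> s \<and> s \<le> r)" for s
    using graded[of s] that by (auto simp: factor_def split: if_splits)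
  then show ?thesis by (auto simp: normal_map_def fun_eq_iff)
qed

lemma normal_tensor_assemble_jet:
  assumes Phi: "Phi \<in> prodN p q r"
  shows "normal_tensor (assemble_jet Phi) s = (\<lambda>x. Phi (s, x))"
proof (intro ext, clarify)
  fix i j K
  have "Phi (s, i, j, K) = 0" if "length K \<noteq> s"
    using that factor_support[of "\<lambda>x. Phi (s, x)" p q r s i j K] Phi unfolding prodN_iff_factors
    by (auto simp: prod_index_def)
  then show "normal_tensor (assemble_jet Phi) s (i, j, K) = Phi (s, i, j, K)"
    by (auto simp: normal_tensor_def assemble_jet_def)
qed

lemma assemble_jet_normal_tensors: "assemble_jet (\<lambda>(s, x). normal_tensor a s x) = a"
  by (auto simp: assemble_jet_def)

lemma gauss_jets_subset_coord_space: "gauss_jets p q r \<subseteq> coord_space (jet_index (p + q) r)"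
  unfolding coord_space_def using gauss_jet_zero by blast

lemma prodN_subset_coord_space: "prodN p q r \<subseteq> coord_space (prod_index (p + q) r)"
proof (intro subsetI, unfold coord_space_def mem_Collect_eq, intro allI impI)
  fix Phi and x :: "nat \<times> nat \<times> nat \<times> nat list"
  assume "Phi \<in> prodN p q r" "x \<notin> prod_index (p + q) r"
  then show "Phi x = 0"
    using factor_support[of "\<lambda>y. Phi (fst x, y)"] unfolding prodN_iff_factors by (cases x) fastforce
qed

lemma finite_jet_index: "finite (jet_index n r)"
proof (rule finite_subset)
  show "jet_index n r \<subseteq> {..<n} \<times> {..<n} \<times> {K. set K \<subseteq> {..<n} \<and> length K \<le> r}"
    by (auto simp: jet_index_def)
qed (use finite_lists_length_le[of "{..<n}" r] in simp)

lemma finite_prod_index: "finite (prod_index n r)"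
proof (rule finite_subset)
  show "prod_index n r \<subseteq> {..r} \<times> {..<n} \<times> {..<n} \<times> {K. set K \<subseteq> {..<n} \<and> length K \<le> r}"
    by (auto simp: prod_index_def)
qed (use finite_lists_length_le[of "{..<n}" r] in simp)

lemma coordinate_selection_normal_map: "coordinate_selection (normal_map r)"
  unfolding coordinate_selection_def
proof
  fix b :: "nat \<times> nat \<times> nat \<times> nat list"
  obtain s i j K where b: "b = (s, i, j, K)" by (cases b)
  show "(\<exists>c. \<forall>x. normal_map r x b = x c) \<or> (\<forall>x. normal_map r x b = 0)"
  proof (cases "(s = 0 \<or> 2 \<le> s \<and> s \<le> r) \<and> length K = s")
    case True
    then have "\<forall>x. normal_map r x b = x (i, j, K)" by (simp add: b normal_map_def normal_tensor_def)
    then show ?thesis by blast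
  next
    case False
    then have "\<forall>x. normal_map r x b = 0" by (auto simp: b normal_map_def normal_tensor_def)
    then show ?thesis by blast
  qed
qed

lemma coordinate_selection_assemble_jet: "coordinate_selection assemble_jet"
  unfolding coordinate_selection_def assemble_jet_def by auto

theorem mainTheorem4:
  fixes p q r :: nat
  shows "diffeo (jet_index (p+q) r) (prod_index (p+q) r) (normal_map r)
                (gauss_jets p q r) (prodN p q r)"
proof (rule diffeo_coordinate_selections[where g = assemble_jet])
  show "normal_map r ` gauss_jets p q r \<subseteq> prodN p q r"
  proof (rule image_subsetI)
    fix a assume "a \<in> gauss_jets p q r"
    then have graded: "\<And>s. normal_tensor a s \<in> factor p q r s"
      by (simp add: gauss_jets_iff_normal_tensors)
    then show "normal_map r a \<in> prodN p q r"
      by (simp add: normal_map_eq[OF graded] prodN_iff_factors)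
  qed
  show "assemble_jet ` prodN p q r \<subseteq> gauss_jets p q r"
    using normal_tensor_assemble_jet by (auto simp: gauss_jets_iff_normal_tensors prodN_iff_factors)
  show "assemble_jet (normal_map r a) = a" if "a \<in> gauss_jets p q r" for a
    using that normal_map_eq assemble_jet_normal_tensors by (metis gauss_jets_iff_normal_tensors)
  show "normal_map r (assemble_jet Phi) = Phi" if Phi: "Phi \<in> prodN p q r" for Phi
  proof -
    have graded: "\<And>s. normal_tensor (assemble_jet Phi) s \<in> factor p q r s"
      using Phi by (simp add: normal_tensor_assemble_jet prodN_iff_factors)
    show ?thesis by (simp add: normal_map_eq[OF graded] normal_tensor_assemble_jet[OF Phi])
  qed
qed (simp_all add: finite_jet_index finite_prod_index gauss_jets_subset_coord_space
      prodN_subset_coord_space coordinate_selection_normal_map coordinate_selection_assemble_jet)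

end
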